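(* Let $G$ be a finite digraph. If $\mathrm{Pol}(G)\not\models\Sigma_M$, then $G\le T_3$.
   Context: A digraph is $(V,E)$ with $E\subseteq V^2$. A polymorphism of arity $k$ of $H$ is a homomorphism $H^k\to H$, where $H^k$ has vertex set $V^k$ and edges $((u_i),(v_i))$ with $(u_i,v_i)\in E$ for all $i$; $\mathrm{Pol}(H)$ is the set of all polymorphisms. $\mathrm{Pol}(H)\models\Sigma_M$ means there exists a ternary $f\in\mathrm{Pol}(H)$ with $f(y,y,x)=f(x,x,x)=f(x,y,y)$ for all $x,y\in V$. $T_3=(\{0,1,2\},<)$. A primitive positive formula is $\exists y_1,\dots,y_n(\psi_1\wedge\dots\wedge\psi_m)$ with each $\psi_i$ being $\bot$, $z_1=z_2$, or $E(z_1,z_2)$; a pp power of $H$ of dimension $d$ is the digraph on $V^d$ with edges $\{(u,v):\phi(u,v)\text{ holds in }H\}$ for a pp formula $\phi(x_1,\dots,x_d,y_1,\dots,y_d)$. $H\le G$ means $G$ is homomorphically equivalent (homomorphisms in both directions) to a pp power of $H$. *)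

theory Defs
  imports Main
begin

definition digraph :: "'a set \<Rightarrow> ('a \<times> 'a) set \<Rightarrow> bool" where
  "digraph V E \<longleftrightarrow> E \<subseteq> V \<times> V"

definition is_hom :: "'a set \<Rightarrow> ('a \<times> 'a) set \<Rightarrow> 'b set \<Rightarrow> ('b \<times> 'b) set \<Rightarrow> ('a \<Rightarrow> 'b) \<Rightarrow> bool" where
  "is_hom V E W F h \<longleftrightarrow> (\<forall>x\<in>V. h x \<in> W) \<and> (\<forall>x y. (x, y) \<in> E \<longrightarrow> (h x, h y) \<in> F)"

definition hom_equiv :: "'a set \<Rightarrow> ('a \<times> 'a) set \<Rightarrow> 'b set \<Rightarrow> ('b \<times> 'b) set \<Rightarrow> bool" where
  "hom_equiv V E W F \<longleftrightarrow> (\<exists>h. is_hom V E W F h) \<and> (\<exists>g. is_hom W F V E g)"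

definition ternary_pol :: "'a set \<Rightarrow> ('a \<times> 'a) set \<Rightarrow> ('a \<Rightarrow> 'a \<Rightarrow> 'a \<Rightarrow> 'a) \<Rightarrow> bool" where
  "ternary_pol V E f \<longleftrightarrow>
     (\<forall>x\<in>V. \<forall>y\<in>V. \<forall>z\<in>V. f x y z \<in> V) \<and>
     (\<forall>x1 y1 x2 y2 x3 y3. (x1, y1) \<in> E \<and> (x2, y2) \<in> E \<and> (x3, y3) \<in> E
        \<longrightarrow> (f x1 x2 x3, f y1 y2 y3) \<in> E)"

definition pol_models_SigmaM :: "'a set \<Rightarrow> ('a \<times> 'a) set \<Rightarrow> bool" where
  "pol_models_SigmaM V E \<longleftrightarrow>
     (\<exists>f. ternary_pol V E f \<and>
        (\<forall>x\<in>V. \<forall>y\<in>V. f y y x = f x x x \<and> f x x x = f x y y))"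

definition T3_V :: "nat set" where "T3_V = {0, 1, 2}"
definition T3_E :: "(nat \<times> nat) set" where "T3_E = {(i, j). i < j \<and> j \<le> 2}"

(* Variables are natural numbers: for a pp power of
   dimension d, variables 0..d-1 are x_1..x_d, d..2d-1 are y_1..y_d, and
   2d..2d+n-1 are the existentially quantified y_1..y_n of the formula. *)
datatype atom = Bot | Eq nat nat | Ed nat nat

definition atom_vars :: "atom \<Rightarrow> nat set" where
  "atom_vars a = (case a of Bot \<Rightarrow> {} | Eq i j \<Rightarrow> {i, j} | Ed i j \<Rightarrow> {i, j})"

fun atom_holds :: "('a \<times> 'a) set \<Rightarrow> (nat \<Rightarrow> 'a) \<Rightarrow> atom \<Rightarrow> bool" where
  "atom_holds E s Bot = False"
| "atom_holds E s (Eq i j) = (s i = s j)"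
| "atom_holds E s (Ed i j) = ((s i, s j) \<in> E)"

(* a pp formula with 2d free variables: number n of existential variables and a list of atoms *)
type_synonym ppf = "nat \<times> atom list"

definition ppf_wf :: "nat \<Rightarrow> ppf \<Rightarrow> bool" where
  "ppf_wf d phi \<longleftrightarrow> (\<forall>a\<in>set (snd phi). atom_vars a \<subseteq> {..<2 * d + fst phi})"

definition ppf_holds :: "'a set \<Rightarrow> ('a \<times> 'a) set \<Rightarrow> nat \<Rightarrow> ppf \<Rightarrow> 'a list \<Rightarrow> 'a list \<Rightarrow> bool" where
  "ppf_holds V E d phi u v \<longleftrightarrow>
     (\<exists>s. (\<forall>i<2 * d. s i = (u @ v) ! i) \<and>
          (\<forall>j<fst phi. s (2 * d + j) \<in> V) \<and>
          (\<forall>a\<in>set (snd phi). atom_holds E s a))"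

definition pp_power_V :: "'a set \<Rightarrow> nat \<Rightarrow> 'a list set" where
  "pp_power_V V d = {u. length u = d \<and> set u \<subseteq> V}"

definition pp_power_E :: "'a set \<Rightarrow> ('a \<times> 'a) set \<Rightarrow> nat \<Rightarrow> ppf \<Rightarrow> ('a list \<times> 'a list) set" where
  "pp_power_E V E d phi =
     {(u, v). u \<in> pp_power_V V d \<and> v \<in> pp_power_V V d \<and> ppf_holds V E d phi u v}"

definition pp_le :: "'a set \<Rightarrow> ('a \<times> 'a) set \<Rightarrow> 'b set \<Rightarrow> ('b \<times> 'b) set \<Rightarrow> bool" where
  "pp_le V E W F \<longleftrightarrow>
     (\<exists>d phi. d \<ge> 1 \<and> ppf_wf d phi \<and>
        hom_equiv (pp_power_V V d) (pp_power_E V E d phi) W F)"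

end

theory Submission
  imports Defs
begin

(* Consider the pp power of dimension |V|^3 whose edges are the pairs (k(x,x,y), k(y,z,z)),
   indexed by (x,y,z), for k a ternary polymorphism. Along a walk of length 3 the middle
   polymorphism is forced to satisfy k(y,y,x) = k(x,x,x) = k(x,y,y), so without such a
   polymorphism the pp power has no walk of length 3 and maps to T_3; conversely the three
   projections form a transitive triangle in it. *)

lemma hom_T3_if_no_walk3:
  assumes "\<And>a b c e. (a, b) \<in> F \<Longrightarrow> (b, c) \<in> F \<Longrightarrow> (c, e) \<in> F \<Longrightarrow> False"
  shows "\<exists>h. is_hom W F T3_V T3_E h"
proof
  define h where "h u = (if \<exists>w w'. (w', w) \<in> F \<and> (w, u) \<in> F then 2
                          else if \<exists>w. (w, u) \<in> F then 1 else 0 :: nat)" for u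
  show "is_hom W F T3_V T3_E h"
    unfolding is_hom_def T3_V_def T3_E_def h_def using assms by auto
qed

lemma hom_T3_if_transitive_triangle:
  assumes "a \<in> W" "b \<in> W" "c \<in> W" "(a, b) \<in> F" "(a, c) \<in> F" "(b, c) \<in> F"
  shows "\<exists>g. is_hom T3_V T3_E W F g"
proof
  define g where "g i = (if i = 0 then a else if i = 1 then b else c)" for i :: nat
  show "is_hom T3_V T3_E W F g"
    unfolding is_hom_def T3_V_def T3_E_def g_def using assms by auto
qed

lemma pol_models_SigmaM_if_minor_walk:
  assumes "ternary_pol V E (\<lambda>x y z. k (x, y, z))"
    and "\<forall>x\<in>V. \<forall>y\<in>V. \<forall>z\<in>V. k\<^sub>1 (y, z, z) = k (x, x, y) \<and> k (y, z, z) = k\<^sub>2 (x, x, y)"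
  shows "pol_models_SigmaM V E"
  unfolding pol_models_SigmaM_def
proof (intro exI conjI ballI)
  show "ternary_pol V E (\<lambda>x y z. k (x, y, z))" by fact
  fix x y assume "x \<in> V" "y \<in> V"
  with assms(2) show "k (y, y, x) = k (x, x, x)" "k (x, x, x) = k (x, y, y)"
    by metis+
qed

definition index_of :: "'b list \<Rightarrow> 'b \<Rightarrow> nat" where
  "index_of xs x = (SOME i. i < length xs \<and> xs ! i = x)"

lemma index_of_spec: "x \<in> set xs \<Longrightarrow> index_of xs x < length xs \<and> xs ! index_of xs x = x"
  unfolding index_of_def by (rule someI_ex) (simp add: in_set_conv_nth)

type_synonym 'a triple = "'a \<times> 'a \<times> 'a"

definition minor_var :: "'a triple list \<Rightarrow> 'a triple \<Rightarrow> nat" where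
  "minor_var ts t = 2 * length ts + index_of ts t"

(* With ts listing V^3, the existential variable minor_var ts t stands for the value k t of a
   ternary polymorphism k, and the free tuples u, v (indexed like ts) are tied to the minors
   of k: u_i = k (\<sigma> (ts ! i)) and v_i = k (\<tau> (ts ! i)). *)
definition minor_ppf ::
    "'a triple list \<Rightarrow> ('a \<times> 'a) list \<Rightarrow> ('a triple \<Rightarrow> 'a triple) \<Rightarrow> ('a triple \<Rightarrow> 'a triple) \<Rightarrow> ppf"
  where
  "minor_ppf ts es \<sigma> \<tau> =
     (length ts,
      [Ed (minor_var ts (a\<^sub>1, a\<^sub>2, a\<^sub>3)) (minor_var ts (b\<^sub>1, b\<^sub>2, b\<^sub>3)).
         (a\<^sub>1, b\<^sub>1) \<leftarrow> es, (a\<^sub>2, b\<^sub>2) \<leftarrow> es, (a\<^sub>3, b\<^sub>3) \<leftarrow> es]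
      @ [Eq i (minor_var ts (\<sigma> (ts ! i))). i \<leftarrow> [0..<length ts]]
      @ [Eq (length ts + i) (minor_var ts (\<tau> (ts ! i))). i \<leftarrow> [0..<length ts]])"

lemma fst_minor_ppf [simp]: "fst (minor_ppf ts es \<sigma> \<tau>) = length ts"
  by (simp add: minor_ppf_def)

lemma set_atoms_minor_ppf:
  "set (snd (minor_ppf ts es \<sigma> \<tau>)) =
      {Ed (minor_var ts (a\<^sub>1, a\<^sub>2, a\<^sub>3)) (minor_var ts (b\<^sub>1, b\<^sub>2, b\<^sub>3)) | a\<^sub>1 a\<^sub>2 a\<^sub>3 b\<^sub>1 b\<^sub>2 b\<^sub>3.
         (a\<^sub>1, b\<^sub>1) \<in> set es \<and> (a\<^sub>2, b\<^sub>2) \<in> set es \<and> (a\<^sub>3, b\<^sub>3) \<in> set es}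
    \<union> {Eq i (minor_var ts (\<sigma> (ts ! i))) | i. i < length ts}
    \<union> {Eq (length ts + i) (minor_var ts (\<tau> (ts ! i))) | i. i < length ts}"
  unfolding minor_ppf_def by (force split: prod.splits)

lemma minor_ppf_wf:
  assumes ts: "set ts = V \<times> V \<times> V" and es: "set es \<subseteq> V \<times> V"
    and \<sigma>: "\<sigma> ` (V \<times> V \<times> V) \<subseteq> V \<times> V \<times> V" and \<tau>: "\<tau> ` (V \<times> V \<times> V) \<subseteq> V \<times> V \<times> V"
  shows "ppf_wf (length ts) (minor_ppf ts es \<sigma> \<tau>)"
proof -
  have var: "minor_var ts t < 3 * length ts" if "t \<in> set ts" for t
    using index_of_spec[OF that] unfolding minor_var_def by simp
  have "\<sigma> (ts ! i) \<in> set ts" "\<tau> (ts ! i) \<in> set ts" if "i < length ts" for i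
    using \<sigma> \<tau> nth_mem[OF that] ts by auto
  moreover have "(a\<^sub>1, a\<^sub>2, a\<^sub>3) \<in> set ts" "(b\<^sub>1, b\<^sub>2, b\<^sub>3) \<in> set ts"
    if "(a\<^sub>1, b\<^sub>1) \<in> set es" "(a\<^sub>2, b\<^sub>2) \<in> set es" "(a\<^sub>3, b\<^sub>3) \<in> set es" for a\<^sub>1 a\<^sub>2 a\<^sub>3 b\<^sub>1 b\<^sub>2 b\<^sub>3
    using that es ts by auto
  ultimately show ?thesis
    unfolding ppf_wf_def set_atoms_minor_ppf by (auto simp: atom_vars_def var)
qed

lemma ppf_holds_minor_ppfD:
  assumes ts: "set ts = V \<times> V \<times> V" and es: "set es = E"
    and len: "length u = length ts" "length v = length ts"
    and holds: "ppf_holds V E (length ts) (minor_ppf ts es \<sigma> \<tau>) u v"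
  shows "\<exists>k. ternary_pol V E (\<lambda>x y z. k (x, y, z)) \<and> u = map (k \<circ> \<sigma>) ts \<and> v = map (k \<circ> \<tau>) ts"
proof -
  let ?atoms = "set (snd (minor_ppf ts es \<sigma> \<tau>))"
  from holds obtain s where s_uv: "\<forall>i<2 * length ts. s i = (u @ v) ! i"
    and s_V: "\<forall>j<length ts. s (2 * length ts + j) \<in> V" and s_atoms: "\<forall>a\<in>?atoms. atom_holds E s a"
    unfolding ppf_holds_def by auto
  define k where "k t = s (minor_var ts t)" for t
  have "ternary_pol V E (\<lambda>x y z. k (x, y, z))"
    unfolding ternary_pol_def
  proof (intro conjI allI impI ballI)
    fix x y z assume "x \<in> V" "y \<in> V" "z \<in> V"
    then show "k (x, y, z) \<in> V"
      using s_V index_of_spec[of "(x, y, z)" ts] ts unfolding k_def minor_var_def by simp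
  next
    fix x\<^sub>1 y\<^sub>1 x\<^sub>2 y\<^sub>2 x\<^sub>3 y\<^sub>3 assume "(x\<^sub>1, y\<^sub>1) \<in> E \<and> (x\<^sub>2, y\<^sub>2) \<in> E \<and> (x\<^sub>3, y\<^sub>3) \<in> E"
    then have "Ed (minor_var ts (x\<^sub>1, x\<^sub>2, x\<^sub>3)) (minor_var ts (y\<^sub>1, y\<^sub>2, y\<^sub>3)) \<in> ?atoms"
      unfolding set_atoms_minor_ppf es by blast
    then show "(k (x\<^sub>1, x\<^sub>2, x\<^sub>3), k (y\<^sub>1, y\<^sub>2, y\<^sub>3)) \<in> E"
      using s_atoms unfolding k_def by fastforce
  qed
  moreover have "u ! i = k (\<sigma> (ts ! i)) \<and> v ! i = k (\<tau> (ts ! i))" if i: "i < length ts" for i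
  proof -
    have "Eq i (minor_var ts (\<sigma> (ts ! i))) \<in> ?atoms" "Eq (length ts + i) (minor_var ts (\<tau> (ts ! i))) \<in> ?atoms"
      using i unfolding set_atoms_minor_ppf by blast+
    with s_atoms s_uv i len show ?thesis
      unfolding k_def by (fastforce simp: nth_append)
  qed
  then have "u = map (k \<circ> \<sigma>) ts" "v = map (k \<circ> \<tau>) ts"
    using len by (auto intro: nth_equalityI)
  ultimately show ?thesis by blast
qed

lemma ppf_holds_minor_ppfI:
  assumes ts: "set ts = V \<times> V \<times> V" and es: "set es = E" and E: "E \<subseteq> V \<times> V"
    and \<sigma>: "\<sigma> ` (V \<times> V \<times> V) \<subseteq> V \<times> V \<times> V" and \<tau>: "\<tau> ` (V \<times> V \<times> V) \<subseteq> V \<times> V \<times> V"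
    and pol: "ternary_pol V E (\<lambda>x y z. k (x, y, z))"
  shows "ppf_holds V E (length ts) (minor_ppf ts es \<sigma> \<tau>) (map (k \<circ> \<sigma>) ts) (map (k \<circ> \<tau>) ts)"
proof -
  let ?d = "length ts" and ?u = "map (k \<circ> \<sigma>) ts" and ?v = "map (k \<circ> \<tau>) ts"
  define s where "s i = (if i < 2 * ?d then (?u @ ?v) ! i else k (ts ! (i - 2 * ?d)))" for i
  have s_var: "s (minor_var ts t) = k t" if "t \<in> set ts" for t
    using index_of_spec[OF that] unfolding s_def minor_var_def by simp
  have s_uv: "s i = k (\<sigma> (ts ! i))" "s (?d + i) = k (\<tau> (ts ! i))" if "i < ?d" for i
    using that unfolding s_def by (simp_all add: nth_append)
  have in_ts: "\<sigma> (ts ! i) \<in> set ts" "\<tau> (ts ! i) \<in> set ts" if "i < ?d" for i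
    using \<sigma> \<tau> nth_mem[OF that] ts by auto
  have "s (2 * ?d + j) \<in> V" if "j < ?d" for j
  proof -
    have "ts ! j \<in> V \<times> V \<times> V"
      using nth_mem[OF that] ts by blast
    then show ?thesis
      using pol unfolding s_def ternary_pol_def by auto
  qed
  moreover have "atom_holds E s (Ed (minor_var ts (a\<^sub>1, a\<^sub>2, a\<^sub>3)) (minor_var ts (b\<^sub>1, b\<^sub>2, b\<^sub>3)))"
    if "(a\<^sub>1, b\<^sub>1) \<in> E" "(a\<^sub>2, b\<^sub>2) \<in> E" "(a\<^sub>3, b\<^sub>3) \<in> E" for a\<^sub>1 a\<^sub>2 a\<^sub>3 b\<^sub>1 b\<^sub>2 b\<^sub>3
  proof -
    have "(a\<^sub>1, a\<^sub>2, a\<^sub>3) \<in> set ts" "(b\<^sub>1, b\<^sub>2, b\<^sub>3) \<in> set ts"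
      using that ts E by auto
    with that pol show ?thesis
      unfolding ternary_pol_def by (simp add: s_var)
  qed
  moreover have "atom_holds E s (Eq i (minor_var ts (\<sigma> (ts ! i))))"
    and "atom_holds E s (Eq (?d + i) (minor_var ts (\<tau> (ts ! i))))" if "i < ?d" for i
    using that s_uv in_ts s_var by simp_all
  ultimately show ?thesis
    unfolding ppf_holds_def set_atoms_minor_ppf es[symmetric]
    by (intro exI[of _ s]) (auto simp: s_def)
qed

lemma map_minor_in_pp_power_V:
  assumes ts: "set ts = V \<times> V \<times> V" and k: "ternary_pol V E (\<lambda>x y z. k (x, y, z))"
    and \<rho>: "\<rho> ` (V \<times> V \<times> V) \<subseteq> V \<times> V \<times> V"
  shows "map (k \<circ> \<rho>) ts \<in> pp_power_V V (length ts)"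
proof -
  have "k (\<rho> t) \<in> V" if "t \<in> set ts" for t
  proof -
    have "\<rho> t \<in> V \<times> V \<times> V"
      using that ts \<rho> by blast
    with k show ?thesis
      unfolding ternary_pol_def by (cases "\<rho> t") auto
  qed
  then show ?thesis
    unfolding pp_power_V_def by auto
qed

lemma pp_power_E_minor_ppf:
  assumes ts: "set ts = V \<times> V \<times> V" and es: "set es = E" and E: "E \<subseteq> V \<times> V"
    and \<sigma>: "\<sigma> ` (V \<times> V \<times> V) \<subseteq> V \<times> V \<times> V" and \<tau>: "\<tau> ` (V \<times> V \<times> V) \<subseteq> V \<times> V \<times> V"
  shows "(u, v) \<in> pp_power_E V E (length ts) (minor_ppf ts es \<sigma> \<tau>) \<longleftrightarrow>
    (\<exists>k. ternary_pol V E (\<lambda>x y z. k (x, y, z)) \<and> u = map (k \<circ> \<sigma>) ts \<and> v = map (k \<circ> \<tau>) ts)"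
proof
  assume "(u, v) \<in> pp_power_E V E (length ts) (minor_ppf ts es \<sigma> \<tau>)"
  then show "\<exists>k. ternary_pol V E (\<lambda>x y z. k (x, y, z)) \<and> u = map (k \<circ> \<sigma>) ts \<and> v = map (k \<circ> \<tau>) ts"
    using ppf_holds_minor_ppfD[OF ts es] unfolding pp_power_E_def pp_power_V_def by blast
next
  assume "\<exists>k. ternary_pol V E (\<lambda>x y z. k (x, y, z)) \<and> u = map (k \<circ> \<sigma>) ts \<and> v = map (k \<circ> \<tau>) ts"
  then show "(u, v) \<in> pp_power_E V E (length ts) (minor_ppf ts es \<sigma> \<tau>)"
    using ppf_holds_minor_ppfI[OF ts es E \<sigma> \<tau>] map_minor_in_pp_power_V[OF ts _ \<sigma>]
      map_minor_in_pp_power_V[OF ts _ \<tau>]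
    unfolding pp_power_E_def by blast
qed

definition SigmaM_ppf :: "'a triple list \<Rightarrow> ('a \<times> 'a) list \<Rightarrow> ppf" where
  "SigmaM_ppf ts es = minor_ppf ts es (\<lambda>(x, y, z). (x, x, y)) (\<lambda>(x, y, z). (y, z, z))"

lemma SigmaM_minors_closed:
  "(\<lambda>(x, y, z). (x, x, y)) ` (V \<times> V \<times> V) \<subseteq> V \<times> V \<times> V"
  "(\<lambda>(x, y, z). (y, z, z)) ` (V \<times> V \<times> V) \<subseteq> V \<times> V \<times> V"
  by auto

lemma SigmaM_ppf_wf:
  assumes "set ts = V \<times> V \<times> V" and "set es \<subseteq> V \<times> V"
  shows "ppf_wf (length ts) (SigmaM_ppf ts es)"
  unfolding SigmaM_ppf_def using minor_ppf_wf[OF assms SigmaM_minors_closed] .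

lemma pp_power_E_SigmaM_ppf:
  assumes "set ts = V \<times> V \<times> V" and "set es = E" and "E \<subseteq> V \<times> V"
  shows "(u, v) \<in> pp_power_E V E (length ts) (SigmaM_ppf ts es) \<longleftrightarrow>
    (\<exists>k. ternary_pol V E (\<lambda>x y z. k (x, y, z)) \<and>
         u = map (\<lambda>(x, y, z). k (x, x, y)) ts \<and> v = map (\<lambda>(x, y, z). k (y, z, z)) ts)"
proof -
  have comp: "k \<circ> (\<lambda>(x, y, z). (x, x, y)) = (\<lambda>(x, y, z). k (x, x, y))"
    "k \<circ> (\<lambda>(x, y, z). (y, z, z)) = (\<lambda>(x, y, z). k (y, z, z))" for k :: "'a triple \<Rightarrow> 'a"
    by auto
  show ?thesis
    unfolding SigmaM_ppf_def pp_power_E_minor_ppf[OF assms SigmaM_minors_closed] comp ..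
qed

lemma pol_models_SigmaM_if_SigmaM_ppf_walk3:
  assumes ts: "set ts = V \<times> V \<times> V" and es: "set es = E" and E: "E \<subseteq> V \<times> V"
    and ab: "(a, b) \<in> pp_power_E V E (length ts) (SigmaM_ppf ts es)"
    and bc: "(b, c) \<in> pp_power_E V E (length ts) (SigmaM_ppf ts es)"
    and ce: "(c, e) \<in> pp_power_E V E (length ts) (SigmaM_ppf ts es)"
  shows "pol_models_SigmaM V E"
proof -
  note edge = pp_power_E_SigmaM_ppf[OF ts es E]
  obtain k\<^sub>1 where "b = map (\<lambda>(x, y, z). k\<^sub>1 (y, z, z)) ts"
    using ab unfolding edge by blast
  moreover obtain k where k: "ternary_pol V E (\<lambda>x y z. k (x, y, z))"
    and "b = map (\<lambda>(x, y, z). k (x, x, y)) ts" "c = map (\<lambda>(x, y, z). k (y, z, z)) ts"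
    using bc unfolding edge by blast
  moreover obtain k\<^sub>2 where "c = map (\<lambda>(x, y, z). k\<^sub>2 (x, x, y)) ts"
    using ce unfolding edge by blast
  ultimately have "\<forall>(x, y, z)\<in>set ts. k\<^sub>1 (y, z, z) = k (x, x, y) \<and> k (y, z, z) = k\<^sub>2 (x, x, y)"
    by auto
  then have "\<forall>x\<in>V. \<forall>y\<in>V. \<forall>z\<in>V. k\<^sub>1 (y, z, z) = k (x, x, y) \<and> k (y, z, z) = k\<^sub>2 (x, x, y)"
    unfolding ts by (simp (no_asm_use))
  then show ?thesis
    using pol_models_SigmaM_if_minor_walk[OF k] by blast
qed

lemma hom_T3_to_SigmaM_pp_power:
  assumes ts: "set ts = V \<times> V \<times> V" and es: "set es = E" and E: "E \<subseteq> V \<times> V"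
  shows "\<exists>g. is_hom T3_V T3_E (pp_power_V V (length ts)) (pp_power_E V E (length ts) (SigmaM_ppf ts es)) g"
proof -
  let ?P = "pp_power_E V E (length ts) (SigmaM_ppf ts es)"
  note edge = pp_power_E_SigmaM_ppf[OF ts es E]
  have projections: "ternary_pol V E (\<lambda>x y z. fst (x, y, z))"
    "ternary_pol V E (\<lambda>x y z. (fst \<circ> snd) (x, y, z))" "ternary_pol V E (\<lambda>x y z. (snd \<circ> snd) (x, y, z))"
    by (simp_all add: ternary_pol_def)
  have "(map fst ts, map (fst \<circ> snd) ts) \<in> ?P"
    unfolding edge using projections(1) by (intro exI[of _ fst]) auto
  moreover have "(map fst ts, map (snd \<circ> snd) ts) \<in> ?P"
    unfolding edge using projections(2) by (intro exI[of _ "fst \<circ> snd"]) auto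
  moreover have "(map (fst \<circ> snd) ts, map (snd \<circ> snd) ts) \<in> ?P"
    unfolding edge using projections(3) by (intro exI[of _ "snd \<circ> snd"]) auto
  moreover have "?P \<subseteq> pp_power_V V (length ts) \<times> pp_power_V V (length ts)"
    unfolding pp_power_E_def by auto
  ultimately show ?thesis
    using hom_T3_if_transitive_triangle[of "map fst ts" _ "map (fst \<circ> snd) ts" "map (snd \<circ> snd) ts" ?P]
    by blast
qed

theorem mainTheorem7:
  fixes V :: "'a set" and E :: "('a \<times> 'a) set"
  assumes "finite V" and "digraph V E"
    and "\<not> pol_models_SigmaM V E"
  shows "pp_le V E T3_V T3_E"
proof -
  have E: "E \<subseteq> V \<times> V" using assms(2) unfolding digraph_def .
  obtain ts where ts: "set ts = V \<times> V \<times> V"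
    using finite_list assms(1) by (metis finite_SigmaI)
  obtain es where es: "set es = E"
    using finite_list finite_subset[OF E] assms(1) by blast
  define P where "P = pp_power_E V E (length ts) (SigmaM_ppf ts es)"
  have "\<exists>h. is_hom (pp_power_V V (length ts)) P T3_V T3_E h"
    using hom_T3_if_no_walk3 pol_models_SigmaM_if_SigmaM_ppf_walk3[OF ts es E] assms(3)
    unfolding P_def by metis
  moreover have "\<exists>g. is_hom T3_V T3_E (pp_power_V V (length ts)) P g"
    using hom_T3_to_SigmaM_pp_power[OF ts es E] unfolding P_def .
  moreover have "V \<noteq> {}"
    using assms(3) E unfolding pol_models_SigmaM_def ternary_pol_def by auto
  then have "length ts \<ge> 1"
    using ts by (cases ts) auto
  moreover have "ppf_wf (length ts) (SigmaM_ppf ts es)"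
    using SigmaM_ppf_wf ts es E by blast
  ultimately show ?thesis
    unfolding pp_le_def hom_equiv_def P_def by blast
qed

end
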